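(* Let $s>1$ be constant and $G\sim G_{n,p}$ with $p=\frac{\log n+\omega(n)}{n}$, $\omega(n)\to\infty$, $np=O(\log n)$. Consider the Birth-Death process on $G$ started with $X=\{v_0\}$, where $d(v_0)=o(np)$, and let $\omega=np/d(v_0)$. Then w.h.p. $v_0\in X$ throughout the first $\omega^{1/2}$ iterations.
   Context: Birth-Death process: $X\subseteq[n]$ is the mutant set (fitness $s$, others fitness 1); at each step a vertex $v$ is chosen with probability proportional to fitness and a uniformly random neighbor $u$ of $v$ takes the type of $v$. An iteration is a step in which $X$ changes. *)

theory Defs
  imports "HOL-Probability.Probability" "HOL-Library.Landau_Symbols"
begin

text \<open>Graphs on the vertex set {0..<n}: an edge indicator on pairs (i,j) with i<j<n.\<close>
type_synonym graph = "nat \<times> nat \<Rightarrow> bool"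

definition gnp :: "nat \<Rightarrow> real \<Rightarrow> graph pmf" where
  "gnp n p = Pi_pmf {(i,j). i < j \<and> j < n} False (\<lambda>_. bernoulli_pmf p)"

definition adj :: "graph \<Rightarrow> nat \<Rightarrow> nat \<Rightarrow> bool" where
  "adj E u v \<longleftrightarrow> u \<noteq> v \<and> E (min u v, max u v)"

definition nbrs :: "nat \<Rightarrow> graph \<Rightarrow> nat \<Rightarrow> nat set" where
  "nbrs n E v = {u. u < n \<and> adj E u v}"

definition deg :: "nat \<Rightarrow> graph \<Rightarrow> nat \<Rightarrow> nat" where
  "deg n E v = card (nbrs n E v)"

definition fitness :: "real \<Rightarrow> nat set \<Rightarrow> nat \<Rightarrow> real" where
  "fitness s X v = (if v \<in> X then s else 1)"

definition choose_vertex :: "nat \<Rightarrow> real \<Rightarrow> nat set \<Rightarrow> nat pmf" where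
  "choose_vertex n s X =
     embed_pmf (\<lambda>v. if v < n then fitness s X v / (\<Sum>w<n. fitness s X w) else 0)"

definition bd_step :: "nat \<Rightarrow> graph \<Rightarrow> real \<Rightarrow> nat set \<Rightarrow> nat set pmf" where
  "bd_step n E s X =
     bind_pmf (choose_vertex n s X) (\<lambda>v.
       if nbrs n E v = {} then return_pmf X
       else map_pmf (\<lambda>u. if v \<in> X then insert u X else X - {u}) (pmf_of_set (nbrs n E v)))"

fun bd_traj :: "nat \<Rightarrow> graph \<Rightarrow> real \<Rightarrow> nat set \<Rightarrow> nat \<Rightarrow> nat set list pmf" where
  "bd_traj n E s X0 0 = return_pmf [X0]"
| "bd_traj n E s X0 (Suc T) =
     bind_pmf (bd_traj n E s X0 T) (\<lambda>xs. map_pmf (\<lambda>Y. xs @ [Y]) (bd_step n E s (last xs)))"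

text \<open>Number of iterations (steps in which X changes) among steps 1..t of a trajectory.\<close>
definition iterations_upto :: "nat set list \<Rightarrow> nat \<Rightarrow> nat" where
  "iterations_upto xs t = card {i. 1 \<le> i \<and> i \<le> t \<and> xs ! i \<noteq> xs ! (i - 1)}"

text \<open>v is not in X at some time at which at most K iterations have happened, i.e. v fails
  to be in X throughout the first K iterations.\<close>
definition lost_within :: "nat set list \<Rightarrow> nat \<Rightarrow> real \<Rightarrow> bool" where
  "lost_within xs v K \<longleftrightarrow> (\<exists>t < length xs. real (iterations_upto xs t) \<le> K \<and> v \<notin> xs ! t)"

end

theory Submission
  imports Defs "HOL-Real_Asymp.Real_Asymp"
begin

text \<open>Suppose \<open>v\<^sub>0\<close> has degree \<open>d\<close> and all its neighbours have degree at least \<open>D\<close>. In one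
  step, \<open>v\<^sub>0\<close> is killed only if a neighbour reproduces and picks \<open>v\<^sub>0\<close> among its \<open>\<ge> D\<close>
  neighbours, whereas \<open>v\<^sub>0\<close> (fitness \<open>s\<close>) changes the state whenever it picks one of those
  same non-mutant neighbours; so the kill probability is at most \<open>d/(sD)\<close> times the probability
  of an iteration. Summing over iterations, \<open>v\<^sub>0\<close> is lost within \<open>K\<close> iterations with probability
  at most \<open>dK/(sD)\<close>, which is \<open>O(\<surd>(d/np)) = o(1)\<close> for \<open>K = \<surd>(np/d)\<close> and \<open>D = np/40\<close>.
  The latter degree bound comes from \<open>G(n,p)\<close>: since \<open>np \<ge> ln n\<close>, a Chernoff bound shows that
  w.h.p. every edge \<open>uv\<close> has \<open>d(u) + d(v) > np/20\<close>, so when \<open>d = o(np)\<close> every neighbour of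
  \<open>v\<^sub>0\<close> has degree at least \<open>np/40\<close>.\<close>

lemma measure_pmf_prob_bind:
  "measure_pmf.prob (bind_pmf M f) A = measure_pmf.expectation M (\<lambda>x. measure_pmf.prob (f x) A)"
proof -
  have "ennreal (measure_pmf.prob (bind_pmf M f) A) = (\<integral>\<^sup>+x. ennreal (measure_pmf.prob (f x) A) \<partial>M)"
    using emeasure_bind_pmf[of M f A] by (simp add: measure_pmf.emeasure_eq_measure)
  also have "\<dots> = ennreal (measure_pmf.expectation M (\<lambda>x. measure_pmf.prob (f x) A))"
    by (intro nn_integral_eq_integral measure_pmf.integrable_const_bound[where B=1]) auto
  finally show ?thesis by (simp add: integral_nonneg)
qed

lemma expectation_le_by_indicators:
  fixes M :: "'a pmf" and F :: "'a \<Rightarrow> real"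
  assumes F: "integrable M F" "\<And>x. F x \<le> c - r * indicator A x + indicator B x"
    and AB: "measure_pmf.prob M B \<le> r * measure_pmf.prob M A"
  shows "measure_pmf.expectation M F \<le> c"
proof -
  have ind: "integrable M (indicator S :: 'a \<Rightarrow> real)" for S
    by (rule measure_pmf.integrable_const_bound[where B=1]) (auto split: split_indicator)
  have "measure_pmf.expectation M F \<le> measure_pmf.expectation M (\<lambda>x. c - r * indicator A x + indicator B x)"
    using F ind by (intro integral_mono) auto
  also have "\<dots> = c - r * measure_pmf.prob M A + measure_pmf.prob M B"
    using ind by (simp add: measure_pmf.prob_space)
  finally show ?thesis using AB by simp
qed

lemma expectation_le_prob_add:
  fixes M :: "'a pmf" and F :: "'a \<Rightarrow> real"
  assumes F: "\<And>x. 0 \<le> F x" "\<And>x. F x \<le> 1" "\<And>x. x \<notin> B \<Longrightarrow> F x \<le> \<delta>" and \<delta>: "0 \<le> \<delta>"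
  shows "measure_pmf.expectation M F \<le> measure_pmf.prob M B + \<delta>"
proof -
  have ind: "integrable M (indicator B :: 'a \<Rightarrow> real)"
    by (rule measure_pmf.integrable_const_bound[where B=1]) (auto split: split_indicator)
  have "integrable M F"
    using F by (intro measure_pmf.integrable_const_bound[where B=1]) auto
  moreover have "F x \<le> indicator B x + \<delta>" for x
    using F(2,3)[of x] \<delta> by (cases "x \<in> B") auto
  ultimately have "measure_pmf.expectation M F \<le> measure_pmf.expectation M (\<lambda>x. indicator B x + \<delta>)"
    using ind by (intro integral_mono) auto
  also have "\<dots> = measure_pmf.prob M B + \<delta>"
    using ind by (simp add: measure_pmf.prob_space)
  finally show ?thesis .
qed

lemma fitness_pos: "s > 0 \<Longrightarrow> fitness s X v > 0"
  by (simp add: fitness_def)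

lemma sum_fitness_pos: "s > 0 \<Longrightarrow> n > 0 \<Longrightarrow> (\<Sum>w<n. fitness s X w) > 0"
  by (intro sum_pos) (auto simp: fitness_pos)

lemma pmf_choose_vertex:
  assumes "s > 0" "n > 0"
  shows "pmf (choose_vertex n s X) v = (if v < n then fitness s X v / (\<Sum>w<n. fitness s X w) else 0)"
proof -
  let ?W = "\<Sum>w<n. fitness s X w"
  let ?f = "\<lambda>v. if v < n then fitness s X v / ?W else 0"
  have W: "?W > 0" using sum_fitness_pos assms by blast
  have nonneg: "0 \<le> ?f v" for v
    using W assms by (auto intro!: divide_nonneg_pos simp: fitness_pos less_imp_le)
  have "(\<integral>\<^sup>+x. ennreal (?f x) \<partial>count_space UNIV) = (\<Sum>x<n. ennreal (?f x))"
    by (intro nn_integral_count_space') auto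
  also have "\<dots> = ennreal (\<Sum>x<n. ?f x)"
    using nonneg by (intro sum_ennreal)
  also have "(\<Sum>x<n. ?f x) = 1"
    using W by (simp add: sum_divide_distrib[symmetric])
  finally show ?thesis
    unfolding choose_vertex_def using pmf_embed_pmf[of ?f v] nonneg by simp
qed

definition reproduce :: "nat \<Rightarrow> graph \<Rightarrow> nat set \<Rightarrow> nat \<Rightarrow> nat set pmf" where
  "reproduce n E X v = (if nbrs n E v = {} then return_pmf X
       else map_pmf (\<lambda>u. if v \<in> X then insert u X else X - {u}) (pmf_of_set (nbrs n E v)))"

lemma prob_bd_step:
  assumes "s > 0" "n > 0"
  shows "measure_pmf.prob (bd_step n E s X) A =
     (\<Sum>v<n. fitness s X v / (\<Sum>w<n. fitness s X w) * measure_pmf.prob (reproduce n E X v) A)"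
proof -
  have "measure_pmf.prob (bd_step n E s X) A =
     measure_pmf.expectation (choose_vertex n s X) (\<lambda>v. measure_pmf.prob (reproduce n E X v) A)"
    unfolding bd_step_def reproduce_def[abs_def] by (rule measure_pmf_prob_bind)
  also have "\<dots> = (\<Sum>v<n. measure_pmf.prob (reproduce n E X v) A * pmf (choose_vertex n s X) v)"
    by (intro integral_measure_pmf_real) (auto simp: set_pmf_eq pmf_choose_vertex assms split: if_splits)
  finally show ?thesis
    by (simp add: pmf_choose_vertex assms mult.commute)
qed

lemma adj_commute: "adj E u v = adj E v u"
  by (auto simp: adj_def min.commute max.commute)

lemma mem_nbrs_commute: "u < n \<Longrightarrow> v < n \<Longrightarrow> u \<in> nbrs n E v \<longleftrightarrow> v \<in> nbrs n E u"
  by (auto simp: nbrs_def adj_commute)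

lemma finite_nbrs [simp]: "finite (nbrs n E v)"
  by (auto simp: nbrs_def)

lemma prob_reproduce_kills:
  assumes "w \<in> X" "w < n" "v < n"
  shows "measure_pmf.prob (reproduce n E X v) {Y. w \<notin> Y} =
     (if v \<notin> X \<and> v \<in> nbrs n E w then 1 / real (deg n E v) else 0)"
proof (cases "nbrs n E v = {}")
  case True
  then have "v \<notin> nbrs n E w" using mem_nbrs_commute[OF assms(3,2)] assms by auto
  then show ?thesis using True assms by (simp add: reproduce_def)
next
  case nonempty: False
  show ?thesis
  proof (cases "v \<in> X")
    case True
    then show ?thesis using nonempty assms
      by (simp add: reproduce_def measure_pmf_of_set[OF nonempty finite_nbrs])
  next
    case False
    have "measure_pmf.prob (reproduce n E X v) {Y. w \<notin> Y} =
       card (nbrs n E v \<inter> {u. w \<notin> X - {u}}) / card (nbrs n E v)"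
      using nonempty False by (simp add: reproduce_def measure_pmf_of_set vimage_def)
    also have "nbrs n E v \<inter> {u. w \<notin> X - {u}} = nbrs n E v \<inter> {w}" using assms by auto
    also have "card \<dots> = (if v \<in> nbrs n E w then 1 else 0)"
      using mem_nbrs_commute[OF assms(3,2)] by auto
    finally show ?thesis using False by (simp add: deg_def)
  qed
qed

lemma prob_reproduce_changes:
  assumes "v \<in> X" "nbrs n E v \<noteq> {}"
  shows "measure_pmf.prob (reproduce n E X v) {Y. Y \<noteq> X} = card (nbrs n E v - X) / real (deg n E v)"
proof -
  have "measure_pmf.prob (reproduce n E X v) {Y. Y \<noteq> X} =
       card (nbrs n E v \<inter> {u. insert u X \<noteq> X}) / card (nbrs n E v)"
    using assms by (simp add: reproduce_def measure_pmf_of_set vimage_def)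
  also have "nbrs n E v \<inter> {u. insert u X \<noteq> X} = nbrs n E v - X" by auto
  finally show ?thesis by (simp add: deg_def)
qed

lemma prob_bd_step_kills_le:
  assumes s: "s > 0" and v: "v \<in> X" "v < n" and D: "D > 0"
    and deg_nbrs: "\<And>u. u \<in> nbrs n E v \<Longrightarrow> D \<le> real (deg n E u)"
  shows "measure_pmf.prob (bd_step n E s X) {Y. v \<notin> Y}
     \<le> card (nbrs n E v - X) / ((\<Sum>w<n. fitness s X w) * D)"
proof -
  define W where "W = (\<Sum>w<n. fitness s X w)"
  have n: "n > 0" using v by simp
  have W: "W > 0" unfolding W_def using sum_fitness_pos s n by simp
  let ?N = "nbrs n E v"
  have "measure_pmf.prob (bd_step n E s X) {Y. v \<notin> Y} =
      (\<Sum>u<n. fitness s X u / W * (if u \<notin> X \<and> u \<in> ?N then 1 / real (deg n E u) else 0))"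
    unfolding prob_bd_step[OF s n] W_def using v by (intro sum.cong) (auto simp: prob_reproduce_kills)
  also have "\<dots> \<le> (\<Sum>u<n. if u \<in> ?N - X then 1 / (W * D) else 0)"
  proof (intro sum_mono)
    fix u
    have "1 / (W * real (deg n E u)) \<le> 1 / (W * D)" if "u \<in> ?N"
      using deg_nbrs[OF that] D W by (intro divide_left_mono mult_left_mono) auto
    then show "fitness s X u / W * (if u \<notin> X \<and> u \<in> ?N then 1 / real (deg n E u) else 0)
        \<le> (if u \<in> ?N - X then 1 / (W * D) else 0)"
      by (auto simp: fitness_def mult.commute)
  qed
  also have "\<dots> = card (?N - X) / (W * D)"
  proof -
    have "{..<n} \<inter> {u \<in> ?N. u \<notin> X} = ?N - X" by (auto simp: nbrs_def)
    then show ?thesis by (simp add: sum.If_cases)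
  qed
  finally show ?thesis unfolding W_def .
qed

lemma prob_bd_step_changes_ge:
  assumes s: "s > 0" and v: "v \<in> X" "v < n" and N: "nbrs n E v \<noteq> {}"
  shows "s / (\<Sum>w<n. fitness s X w) * (card (nbrs n E v - X) / real (deg n E v))
     \<le> measure_pmf.prob (bd_step n E s X) {Y. Y \<noteq> X}"
proof -
  define W where "W = (\<Sum>w<n. fitness s X w)"
  have n: "n > 0" using v by simp
  have W: "W > 0" unfolding W_def using sum_fitness_pos s n by simp
  have "fitness s X v / W * measure_pmf.prob (reproduce n E X v) {Y. Y \<noteq> X}
      \<le> (\<Sum>u<n. fitness s X u / W * measure_pmf.prob (reproduce n E X u) {Y. Y \<noteq> X})"
    using v W s by (intro member_le_sum) (auto simp: fitness_def)
  then show ?thesis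
    using prob_reproduce_changes[OF v(1) N] v unfolding prob_bd_step[OF s n] W_def
    by (simp add: fitness_def)
qed

text \<open>With \<open>W\<close> the total fitness: \<open>v\<close> dies only if a non-mutant neighbour \<open>u\<close> (fitness 1)
  reproduces onto it, which has probability at most \<open>1/(W D)\<close> for each such \<open>u\<close>; and \<open>v\<close>
  itself (fitness \<open>s\<close>) causes an iteration by reproducing onto \<open>u\<close> with probability \<open>s/(W d(v))\<close>.\<close>
lemma prob_bd_step_kills_le_changes:
  assumes s: "s > 0" and v: "v \<in> X" "v < n" and D: "D > 0"
    and deg_nbrs: "\<And>u. u \<in> nbrs n E v \<Longrightarrow> D \<le> real (deg n E u)"
  shows "measure_pmf.prob (bd_step n E s X) {Y. v \<notin> Y}
     \<le> real (deg n E v) / (s * D) * measure_pmf.prob (bd_step n E s X) {Y. Y \<noteq> X}"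
proof (cases "nbrs n E v = {}")
  case True
  then show ?thesis
    using prob_bd_step_kills_le[OF assms] by (simp add: deg_def)
next
  case False
  define W where "W = (\<Sum>w<n. fitness s X w)"
  have W: "W > 0" unfolding W_def using sum_fitness_pos s v(2) by simp
  have d: "real (deg n E v) > 0" using False by (simp add: deg_def card_gt_0_iff)
  have "card (nbrs n E v - X) / (W * D)
      = real (deg n E v) / (s * D) * (s / W * (card (nbrs n E v - X) / real (deg n E v)))"
    using d s D W by (simp add: field_simps)
  also have "\<dots> \<le> real (deg n E v) / (s * D) * measure_pmf.prob (bd_step n E s X) {Y. Y \<noteq> X}"
    using prob_bd_step_changes_ge[OF s v False] d s D unfolding W_def by (intro mult_left_mono) auto
  finally show ?thesis using prob_bd_step_kills_le[OF assms] unfolding W_def by linarith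
qed

lemma set_pmf_bd_traj: "ys \<in> set_pmf (bd_traj n E s X T) \<Longrightarrow> length ys = Suc T \<and> hd ys = X"
proof (induction T arbitrary: ys)
  case (Suc T)
  then obtain xs Y where "xs \<in> set_pmf (bd_traj n E s X T)" "ys = xs @ [Y]" by auto
  with Suc.IH[of xs] show ?case by (cases xs) auto
qed simp

lemma bd_traj_Suc_Cons:
  "bd_traj n E s X (Suc T) = bind_pmf (bd_step n E s X) (\<lambda>Y. map_pmf ((#) X) (bd_traj n E s Y T))"
proof (induction T arbitrary: X)
  case 0
  then show ?case by (simp add: map_pmf_def bind_return_pmf bind_return_pmf')
next
  case (Suc T)
  let ?ext = "\<lambda>xs. map_pmf (\<lambda>Z. xs @ [Z]) (bd_step n E s (last xs))"
  have ext_Cons: "bind_pmf (map_pmf ((#) X) (bd_traj n E s Y T)) ?ext =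
      map_pmf ((#) X) (bind_pmf (bd_traj n E s Y T) ?ext)" for Y
    unfolding bind_map_pmf map_bind_pmf
  proof (intro bind_pmf_cong refl)
    fix xs assume "xs \<in> set_pmf (bd_traj n E s Y T)"
    then have "xs \<noteq> []" using set_pmf_bd_traj by fastforce
    then show "?ext (X # xs) = map_pmf ((#) X) (?ext xs)"
      by (simp add: pmf.map_comp o_def)
  qed
  have "bd_traj n E s X (Suc (Suc T)) = bind_pmf (bd_traj n E s X (Suc T)) ?ext" by simp
  also have "\<dots> = bind_pmf (bd_step n E s X) (\<lambda>Y. map_pmf ((#) X) (bind_pmf (bd_traj n E s Y T) ?ext))"
    unfolding Suc.IH bind_assoc_pmf ext_Cons ..
  finally show ?case by simp
qed

lemma iterations_upto_Cons:
  assumes "ys \<noteq> []"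
  shows "iterations_upto (X # ys) (Suc t) = of_bool (hd ys \<noteq> X) + iterations_upto ys t"
proof -
  let ?I = "{i. 1 \<le> i \<and> i \<le> t \<and> ys ! i \<noteq> ys ! (i - 1)}"
  have eq: "{i. 1 \<le> i \<and> i \<le> Suc t \<and> (X # ys) ! i \<noteq> (X # ys) ! (i - 1)} =
     (if hd ys \<noteq> X then {1} else {}) \<union> Suc ` ?I"
  proof (intro set_eqI iffI)
    fix i assume i: "i \<in> {i. 1 \<le> i \<and> i \<le> Suc t \<and> (X # ys) ! i \<noteq> (X # ys) ! (i - 1)}"
    show "i \<in> (if hd ys \<noteq> X then {1} else {}) \<union> Suc ` ?I"
    proof (cases "i = 1")
      case True then show ?thesis using i assms by (auto simp: hd_conv_nth)
    next
      case False
      then obtain j where "i = Suc (Suc j)" using i by (cases i; cases "i - 1") auto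
      then show ?thesis using i by (auto intro!: image_eqI[of _ _ "Suc j"])
    qed
  qed (use assms in \<open>auto simp: hd_conv_nth split: if_splits\<close>)
  show ?thesis unfolding iterations_upto_def eq
    by (subst card_Un_disjoint) (auto simp: card_image)
qed

lemma lost_within_Cons:
  assumes "v \<in> X" "ys \<noteq> []"
  shows "lost_within (X # ys) v K \<longleftrightarrow> lost_within ys v (K - of_bool (hd ys \<noteq> X))"
proof
  assume "lost_within (X # ys) v K"
  then obtain t where t: "t < length (X # ys)" "real (iterations_upto (X # ys) t) \<le> K" "v \<notin> (X # ys) ! t"
    unfolding lost_within_def by blast
  then obtain t' where "t = Suc t'" using assms by (cases t) auto
  then show "lost_within ys v (K - of_bool (hd ys \<noteq> X))"
    using t iterations_upto_Cons[OF assms(2), of X t'] unfolding lost_within_def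
    by (intro exI[of _ t']) auto
next
  assume "lost_within ys v (K - of_bool (hd ys \<noteq> X))"
  then obtain t where "t < length ys" "real (iterations_upto ys t) \<le> K - of_bool (hd ys \<noteq> X)" "v \<notin> ys ! t"
    unfolding lost_within_def by blast
  then show "lost_within (X # ys) v K"
    using iterations_upto_Cons[OF assms(2), of X t] unfolding lost_within_def
    by (intro exI[of _ "Suc t"]) auto
qed

lemma not_lost_within_neg: "K < 0 \<Longrightarrow> \<not> lost_within ys v K"
  by (auto simp: lost_within_def)

lemma prob_bd_traj_Suc:
  "measure_pmf.prob (bd_traj n E s X (Suc T)) A =
   measure_pmf.expectation (bd_step n E s X) (\<lambda>Y. measure_pmf.prob (bd_traj n E s Y T) {ys. X # ys \<in> A})"
  unfolding bd_traj_Suc_Cons measure_pmf_prob_bind by (simp add: vimage_def)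

lemma prob_lost_within_Cons:
  assumes "v \<in> X"
  shows "measure_pmf.prob (bd_traj n E s Y T) {ys. lost_within (X # ys) v K} =
    measure_pmf.prob (bd_traj n E s Y T) {ys. lost_within ys v (K - of_bool (Y \<noteq> X))}"
proof -
  have "{ys. lost_within (X # ys) v K} \<inter> set_pmf (bd_traj n E s Y T) =
      {ys. lost_within ys v (K - of_bool (Y \<noteq> X))} \<inter> set_pmf (bd_traj n E s Y T)"
  proof -
    have "lost_within (X # ys) v K \<longleftrightarrow> lost_within ys v (K - of_bool (Y \<noteq> X))"
      if "ys \<in> set_pmf (bd_traj n E s Y T)" for ys
      using set_pmf_bd_traj[OF that] lost_within_Cons[OF assms, of ys K] by (cases ys) auto
    then show ?thesis by blast
  qed
  then show ?thesis by (metis measure_Int_set_pmf)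
qed

text \<open>Induction on \<open>T\<close> with the budget \<open>r K\<close>, \<open>r = d(v)/(s D)\<close>: every iteration uses up \<open>r\<close>
  of it, while by the previous lemma a step kills \<open>v\<close> with probability at most \<open>r\<close> times the
  probability of an iteration.\<close>
lemma prob_lost_within_le:
  assumes s: "s > 0" and v: "v < n" "v \<in> X" and D: "D > 0"
    and deg_nbrs: "\<And>u. u \<in> nbrs n E v \<Longrightarrow> D \<le> real (deg n E u)"
  shows "measure_pmf.prob (bd_traj n E s X T) {ys. lost_within ys v K}
           \<le> real (deg n E v) / (s * D) * max 0 K"
  using v(2)
proof (induction T arbitrary: X K)
  case 0
  then show ?case using s D by (auto simp: lost_within_def)
next
  case (Suc T)
  define r where "r = real (deg n E v) / (s * D)"
  have r: "r \<ge> 0" unfolding r_def using s D by auto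
  let ?M = "bd_step n E s X"
  define F where "F Y = measure_pmf.prob (bd_traj n E s Y T) {ys. lost_within ys v (K - of_bool (Y \<noteq> X))}" for Y
  have F: "measure_pmf.prob (bd_traj n E s X (Suc T)) {ys. lost_within ys v K} = measure_pmf.expectation ?M F"
    unfolding prob_bd_traj_Suc F_def using prob_lost_within_Cons[OF Suc.prems] by simp
  have F_X: "F X \<le> r * max 0 K"
    unfolding F_def r_def using Suc.IH[OF Suc.prems] by simp
  have intF: "integrable ?M F"
    by (intro measure_pmf.integrable_const_bound[where B=1]) (auto simp: F_def)
  show ?case
  proof (cases "K < 1")
    case True
    have "F Y \<le> r * max 0 K" for Y
      using F_X not_lost_within_neg[of "K - 1"] True r by (cases "Y = X") (auto simp: F_def)
    then have "measure_pmf.expectation ?M F \<le> measure_pmf.expectation ?M (\<lambda>_. r * max 0 K)"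
      by (intro integral_mono intF) auto
    then show ?thesis unfolding F r_def by simp
  next
    case False
    have "F Y \<le> r * K - r * indicator {Y. Y \<noteq> X} Y + indicator {Y. v \<notin> Y} Y" for Y
    proof (cases "v \<in> Y")
      case True
      then show ?thesis
        using F_X Suc.IH[OF True, of "K - 1"] False unfolding F_def r_def
        by (cases "Y = X") (auto simp: right_diff_distrib)
    next
      case dead: False
      have "F Y \<le> 1" unfolding F_def by simp
      moreover have "r \<le> r * K" using False r by (simp add: mult_le_cancel_left1)
      ultimately show ?thesis using dead Suc.prems by (auto split: split_indicator)
    qed
    moreover have "measure_pmf.prob ?M {Y. v \<notin> Y} \<le> r * measure_pmf.prob ?M {Y. Y \<noteq> X}"
      using prob_bd_step_kills_le_changes[OF s Suc.prems v(1) D deg_nbrs] unfolding r_def .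
    ultimately have "measure_pmf.expectation ?M F \<le> r * K"
      by (rule expectation_le_by_indicators[OF intF])
    then show ?thesis unfolding F r_def using False by simp
  qed
qed

definition sorted_pair :: "nat \<Rightarrow> nat \<Rightarrow> nat \<times> nat" where
  "sorted_pair u w = (min u w, max u w)"

definition incident_pairs :: "nat \<Rightarrow> nat \<Rightarrow> nat \<Rightarrow> (nat \<times> nat) set" where
  "incident_pairs n u v = sorted_pair u ` ({..<n} - {u, v}) \<union> sorted_pair v ` ({..<n} - {u, v})"

lemma inj_on_sorted_pair: "inj_on (sorted_pair u) (- {u})"
  by (auto intro!: inj_onI simp: sorted_pair_def min_def max_def split: if_splits)

lemma sorted_pair_neq: "u \<noteq> v \<Longrightarrow> w \<notin> {u, v} \<Longrightarrow> w' \<notin> {u, v} \<Longrightarrow> sorted_pair u w \<noteq> sorted_pair v w'"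
  by (auto simp: sorted_pair_def min_def max_def split: if_splits)

lemma adj_iff_sorted_pair: "adj E w u \<longleftrightarrow> w \<noteq> u \<and> E (sorted_pair u w)"
  by (auto simp: adj_def sorted_pair_def min.commute max.commute)

lemma card_two_stars:
  assumes "u \<noteq> v" "A \<subseteq> - {u, v}" "B \<subseteq> - {u, v}" "finite A" "finite B"
  shows "card (sorted_pair u ` A \<union> sorted_pair v ` B) = card A + card B"
proof -
  have inj: "inj_on (sorted_pair u) A" "inj_on (sorted_pair v) B"
    using assms(2,3) by (auto intro: inj_on_subset[OF inj_on_sorted_pair])
  moreover have disj:  "sorted_pair u ` A \<inter> sorted_pair v ` B = {}"
  proof -
    have "sorted_pair u w \<noteq> sorted_pair v w'" if "w \<in> A" "w' \<in> B" for w w'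
      using sorted_pair_neq[OF assms(1)] assms(2,3) that by blast
    then show ?thesis by blast
  qed
  show ?thesis
    using assms(4,5) by (simp add: card_Un_disjoint[OF _ _ disj] card_image[OF inj(1)] card_image[OF inj(2)])
qed

lemma card_incident_pairs:
  assumes "u < v" "v < n"
  shows "card (incident_pairs n u v) = 2 * (n - 2)"
proof -
  have "card ({..<n} - {u, v}) = n - 2" using assms by (simp add: card_Diff_subset)
  moreover have "card (incident_pairs n u v) = card ({..<n} - {u, v}) + card ({..<n} - {u, v})"
    unfolding incident_pairs_def using assms by (intro card_two_stars) auto
  ultimately show ?thesis by simp
qed

lemma pair_notin_incident_pairs: "u < v \<Longrightarrow> (u, v) \<notin> incident_pairs n u v"
  by (auto simp: incident_pairs_def sorted_pair_def min_def max_def split: if_splits)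

lemma card_incident_edges:
  assumes "u < v" "v < n" "E (u, v)"
  shows "card {e \<in> incident_pairs n u v. E e} + 2 = deg n E u + deg n E v"
proof -
  let ?A = "{w \<in> {..<n} - {u, v}. adj E w u}" and ?B = "{w \<in> {..<n} - {u, v}. adj E w v}"
  have "{e \<in> incident_pairs n u v. E e} = sorted_pair u ` ?A \<union> sorted_pair v ` ?B"
    unfolding incident_pairs_def adj_iff_sorted_pair by blast
  then have "card {e \<in> incident_pairs n u v. E e} = card ?A + card ?B"
    using card_two_stars[of u v ?A ?B] assms by auto
  moreover have "nbrs n E u = insert v ?A" "nbrs n E v = insert u ?B"
    using assms by (auto simp: nbrs_def adj_def)
  ultimately show ?thesis by (simp add: deg_def)
qed

text \<open>Exponential weight for a Chernoff bound on \<open>d(u) + d(v)\<close> given the edge \<open>uv\<close>: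
  its product over all pairs is \<open>t^(d(u)+d(v))\<close> on graphs containing \<open>uv\<close> and \<open>0\<close> otherwise.\<close>
definition pair_weight :: "nat \<Rightarrow> nat \<Rightarrow> nat \<Rightarrow> real \<Rightarrow> nat \<times> nat \<Rightarrow> bool \<Rightarrow> real" where
  "pair_weight n u v t e b =
     (if e = (u, v) then (if b then t^2 else 0)
      else if e \<in> incident_pairs n u v then (if b then t else 1) else 1)"

lemma prod_pair_weight_split:
  assumes "u < v" "v < n" "\<And>e. e \<notin> insert (u, v) (incident_pairs n u v) \<Longrightarrow> f e = 1"
  shows "(\<Prod>e\<in>{(i, j). i < j \<and> j < n}. f e) = f (u, v) * (\<Prod>e\<in>incident_pairs n u v. f e)"
proof -
  let ?P = "{(i, j). i < j \<and> j < n}"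
  have "finite ?P" by (rule finite_subset[of _ "{..<n} \<times> {..<n}"]) auto
  moreover have "insert (u, v) (incident_pairs n u v) \<subseteq> ?P"
    using assms by (auto simp: incident_pairs_def sorted_pair_def min_def max_def)
  ultimately have "(\<Prod>e\<in>?P. f e) = (\<Prod>e\<in>insert (u, v) (incident_pairs n u v). f e)"
    using assms(3) by (intro prod.mono_neutral_right) auto
  also have "\<dots> = f (u, v) * (\<Prod>e\<in>incident_pairs n u v. f e)"
    using pair_notin_incident_pairs[OF assms(1)] by (simp add: incident_pairs_def)
  finally show ?thesis .
qed

lemma prod_pair_weight:
  assumes "u < v" "v < n"
  shows "(\<Prod>e\<in>{(i, j). i < j \<and> j < n}. pair_weight n u v t e (E e))
     = (if E (u, v) then t ^ (deg n E u + deg n E v) else 0)"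
proof -
  let ?S = "incident_pairs n u v"
  have fin: "finite ?S" unfolding incident_pairs_def by simp
  have "(\<Prod>e\<in>?S. pair_weight n u v t e (E e)) = (\<Prod>e\<in>?S. if E e then t else 1)"
    using pair_notin_incident_pairs[OF assms(1)]
    by (intro prod.cong) (auto simp: pair_weight_def)
  also have "\<dots> = t ^ card {e \<in> ?S. E e}"
    using fin by (simp add: prod.If_cases Int_def)
  finally have S: "(\<Prod>e\<in>?S. pair_weight n u v t e (E e)) = t ^ card {e \<in> ?S. E e}" .
  have deg: "E (u, v) \<Longrightarrow> deg n E u + deg n E v = card {e \<in> ?S. E e} + 2"
    using card_incident_edges[OF assms] by simp
  have "(\<Prod>e\<in>{(i, j). i < j \<and> j < n}. pair_weight n u v t e (E e))
      = pair_weight n u v t (u, v) (E (u, v)) * (\<Prod>e\<in>?S. pair_weight n u v t e (E e))"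
    by (rule prod_pair_weight_split[OF assms]) (auto simp: pair_weight_def)
  then show ?thesis
    unfolding S using deg by (auto simp: pair_weight_def power_add power2_eq_square mult.commute)
qed

lemma expectation_prod_pair_weight:
  assumes uv: "u < v" "v < n" and p: "0 \<le> p" "p \<le> 1" and t: "0 \<le> t"
  shows "measure_pmf.expectation (gnp n p) (\<lambda>E. \<Prod>e\<in>{(i, j). i < j \<and> j < n}. pair_weight n u v t e (E e))
     = p * t^2 * (1 - p + p * t) ^ (2 * (n - 2))"
proof -
  let ?P = "{(i, j). i < j \<and> j < n}"
  let ?f = "\<lambda>e. measure_pmf.expectation (bernoulli_pmf p) (pair_weight n u v t e)"
  have "finite ?P" by (rule finite_subset[of _ "{..<n} \<times> {..<n}"]) auto
  then have "measure_pmf.expectation (gnp n p) (\<lambda>E. \<Prod>e\<in>?P. pair_weight n u v t e (E e)) = (\<Prod>e\<in>?P. ?f e)"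
    unfolding gnp_def using t by (intro expectation_prod_Pi_pmf) (auto simp: pair_weight_def integrable_measure_pmf_finite)
  also have "\<dots> = ?f (u, v) * (\<Prod>e\<in>incident_pairs n u v. ?f e)"
    by (rule prod_pair_weight_split[OF uv]) (simp add: pair_weight_def[abs_def])
  also have "(\<Prod>e\<in>incident_pairs n u v. ?f e) = (\<Prod>e\<in>incident_pairs n u v. 1 - p + p * t)"
    using pair_notin_incident_pairs[OF uv(1)] p by (intro prod.cong) (auto simp: pair_weight_def)
  finally show ?thesis
    using card_incident_pairs[OF uv] p by (simp add: pair_weight_def)
qed

lemma one_le_powr_nonpos: "0 < (t::real) \<Longrightarrow> t \<le> 1 \<Longrightarrow> x \<le> 0 \<Longrightarrow> 1 \<le> t powr x"
  using ge_one_powr_ge_zero[of "1 / t" "- x"] by (simp add: powr_divide powr_minus_divide)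

lemma prob_light_pair_le:
  assumes uv: "u < v" "v < n" and p: "0 \<le> p" "p \<le> 1" and t: "0 < t" "t \<le> 1"
  shows "measure_pmf.prob (gnp n p) {E. E (u, v) \<and> real (deg n E u + deg n E v) \<le> M}
      \<le> t powr (-M) * (p * t^2 * (1 - p + p * t) ^ (2 * (n - 2)))"
proof -
  define A where "A = {E. E (u, v) \<and> real (deg n E u + deg n E v) \<le> M}"
  define h where "h E = t powr (-M) * (\<Prod>e\<in>{(i, j). i < j \<and> j < n}. pair_weight n u v t e (E e))" for E
  have h: "h E = (if E (u, v) then t powr (-M) * t ^ (deg n E u + deg n E v) else 0)" for E
    unfolding h_def prod_pair_weight[OF uv] by simp
  have "1 \<le> t powr (-M) * t ^ k" if "real k \<le> M" for k
  proof -
    have "t powr (-M) * t ^ k = t powr (real k - M)"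
      using t by (simp add: powr_diff powr_minus_divide powr_realpow)
    then show ?thesis using t that one_le_powr_nonpos[of t "real k - M"] by simp
  qed
  then have markov: "indicator A E \<le> h E" for E
    using t by (auto simp: A_def h split: split_indicator)
  have "integrable (gnp n p) h"
    unfolding h_def gnp_def
    by (intro integrable_mult_right integrable_prod_Pi_pmf integrable_measure_pmf_finite)
       (auto intro: finite_subset[of _ "{..<n} \<times> {..<n}"])
  moreover have "integrable (gnp n p) (indicator A :: graph \<Rightarrow> real)"
    by (rule measure_pmf.integrable_const_bound[where B=1]) (auto split: split_indicator)
  ultimately have "measure_pmf.expectation (gnp n p) (indicator A) \<le> measure_pmf.expectation (gnp n p) h"
    by (intro integral_mono markov)
  also have "\<dots> = t powr (-M) * (p * t^2 * (1 - p + p * t) ^ (2 * (n - 2)))"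
    unfolding h_def using expectation_prod_pair_weight[OF uv p] t by simp
  finally show ?thesis unfolding A_def by simp
qed

definition has_light_edge :: "nat \<Rightarrow> graph \<Rightarrow> real \<Rightarrow> bool" where
  "has_light_edge n E M \<longleftrightarrow> (\<exists>u v. u < v \<and> v < n \<and> E (u, v) \<and> real (deg n E u + deg n E v) \<le> M)"

lemma prob_has_light_edge_le:
  assumes p: "0 \<le> p" "p \<le> 1" and t: "0 < t" "t \<le> 1"
  shows "measure_pmf.prob (gnp n p) {E. has_light_edge n E M}
      \<le> real n ^ 2 * (t powr (-M) * (p * t^2 * (1 - p + p * t) ^ (2 * (n - 2))))"
proof -
  let ?P = "{(u, v). u < v \<and> v < (n::nat)}"
  let ?A = "\<lambda>(u, v). {E. E (u, v) \<and> real (deg n E u + deg n E v) \<le> M}"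
  let ?b = "t powr (-M) * (p * t^2 * (1 - p + p * t) ^ (2 * (n - 2)))"
  have P: "?P \<subseteq> {..<n} \<times> {..<n}" by auto
  then have "finite ?P" using finite_subset by blast
  have "{E. has_light_edge n E M} = (\<Union>i\<in>?P. ?A i)"
    unfolding has_light_edge_def by auto
  then have "measure_pmf.prob (gnp n p) {E. has_light_edge n E M} \<le> (\<Sum>i\<in>?P. measure_pmf.prob (gnp n p) (?A i))"
    using \<open>finite ?P\<close> by (simp add: measure_pmf.finite_measure_subadditive_finite)
  also have "\<dots> \<le> (\<Sum>i\<in>?P. ?b)"
    using prob_light_pair_le[OF _ _ p t] by (intro sum_mono) auto
  also have "\<dots> \<le> real n ^ 2 * ?b"
  proof -
    have "card ?P \<le> n ^ 2"
      using card_mono[OF _ P] by (simp add: card_cartesian_product power2_eq_square)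
    then show ?thesis
      using p t by (simp, intro mult_right_mono) (auto simp: of_nat_le_iff[symmetric])
  qed
  finally show ?thesis .
qed

lemma binomial_factor_pow_le:
  fixes p :: real
  assumes n: "n \<ge> 2" and p: "0 \<le> p" "p \<le> 1"
  shows "(1 - p + p * exp (-2)) ^ (2 * (n - 2)) \<le> exp (- (4/3) * (real n * p) + 3)"
proof -
  have "exp (-2::real) \<le> 1 / 3"
    using exp_ge_add_one_self[of 2] by (simp add: exp_minus field_simps)
  then have "p * exp (-2) \<le> p * (1 / 3)"
    using p by (intro mult_left_mono)
  then have "1 - p + p * exp (-2) \<le> 1 + (- (2 * p / 3))"
    by simp
  also have "\<dots> \<le> exp (- (2 * p / 3))" by (rule exp_ge_add_one_self)
  finally have "(1 - p + p * exp (-2)) ^ (2 * (n - 2)) \<le> exp (- (2 * p / 3)) ^ (2 * (n - 2))"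
    using p by (intro power_mono) (auto simp: add_nonneg_nonneg)
  also have "\<dots> = exp (- (4/3) * (real n * p) + (8/3) * p)"
    using n by (simp add: exp_of_nat_mult[symmetric] of_nat_diff algebra_simps)
  also have "\<dots> \<le> exp (- (4/3) * (real n * p) + 3)" using p by simp
  finally show ?thesis .
qed

text \<open>Here \<open>t = exp (-2)\<close>: the union bound is at most \<open>n\<^sup>2 exp (x/10) p exp (3 - 4x/3) =
  exp 3 n x exp (-37x/30)\<close>, and \<open>x \<ge> ln n\<close> gives \<open>exp (-37x/30) \<le> n powr (-37/30)\<close>.\<close>
lemma light_edge_bound_le:
  fixes x p C :: real
  assumes n: "n \<ge> 2" and p: "0 \<le> p" "p \<le> 1"
    and x: "x = real n * p" "ln (real n) \<le> x" "x \<le> C * ln (real n)"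
  shows "real n ^ 2 * (exp (-2) powr (-(x / 20)) * (p * exp (-2) ^ 2 * (1 - p + p * exp (-2)) ^ (2 * (n - 2))))
     \<le> exp 3 * C * ln (real n) * real n powr (-7/30)"
proof -
  have np: "real n > 0" using n by simp
  have "0 \<le> ln (real n)" using n by simp
  then have Cln: "0 \<le> C * ln (real n)" using x by linarith
  have "real n ^ 2 * (exp (-2) powr (-(x / 20)) * (p * exp (-2) ^ 2 * (1 - p + p * exp (-2)) ^ (2 * (n - 2))))
      \<le> real n ^ 2 * (exp (x / 10) * (p * exp (- (4/3) * x + 3)))"
    using binomial_factor_pow_le[OF n p] p x(1)
    by (intro mult_left_mono mult_mono) (auto simp: powr_def mult_left_le power_le_one)
  also have "\<dots> = exp 3 * (real n * x * exp (- (37/30) * x))"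
  proof -
    have "exp (x / 10) * exp (- (4/3) * x + 3) = exp 3 * exp (- (37/30) * x)"
      unfolding mult_exp_exp by (intro arg_cong[where f=exp]) simp
    then show ?thesis
      using x(1) by (simp add: power2_eq_square algebra_simps)
  qed
  also have "\<dots> \<le> exp 3 * (real n * (C * ln (real n)) * exp (- (37/30) * ln (real n)))"
    using x np p Cln by (intro mult_left_mono mult_mono) auto
  also have "real n * (C * ln (real n)) * exp (- (37/30) * ln (real n)) = C * ln (real n) * real n powr (-7/30)"
  proof -
    have "exp (- (37/30) * ln (real n)) = real n powr (-37/30)" using np by (simp add: powr_def)
    then show ?thesis using powr_mult_base[of "real n" "-37/30"] by simp
  qed
  finally show ?thesis by (simp add: mult.assoc)
qed

lemma deg_add_deg_nbr_gt:
  assumes "\<not> has_light_edge n E M" "v < n" "u \<in> nbrs n E v"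
  shows "M < real (deg n E u + deg n E v)"
proof -
  have "min u v < max u v" "max u v < n" "E (min u v, max u v)"
    using assms(2,3) by (auto simp: nbrs_def adj_def)
  then have "M < real (deg n E (min u v) + deg n E (max u v))"
    using assms(1) unfolding has_light_edge_def by (meson not_le)
  then show ?thesis by (cases "u \<le> v") (auto simp: min_def max_def)
qed

lemma prob_lost_within_no_light_edge:
  assumes s: "s > 0" and v: "v < n" and x: "x > 0"
    and light: "\<not> has_light_edge n E (x / 20)" and d: "real (deg n E v) \<le> x / 40"
  shows "measure_pmf.prob (bd_traj n E s {v} T) {ys. lost_within ys v (sqrt (x / real (deg n E v)))}
     \<le> 40 / s * sqrt (real (deg n E v) / x)"
proof -
  define d where "d = real (deg n E v)"
  have "x / 40 \<le> real (deg n E u)" if "u \<in> nbrs n E v" for u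
    using deg_add_deg_nbr_gt[OF light v that] d by simp
  then have "measure_pmf.prob (bd_traj n E s {v} T) {ys. lost_within ys v (sqrt (x / d))}
      \<le> d / (s * (x / 40)) * max 0 (sqrt (x / d))"
    unfolding d_def using x by (intro prob_lost_within_le[OF s v]) auto
  also have "\<dots> = d / (s * (x / 40)) * sqrt (x / d)"
    using x unfolding d_def by simp
  also have "\<dots> = 40 / s * sqrt (d / x)"
  proof (cases "d = 0")
    case False
    then have "d > 0" unfolding d_def by simp
    then have "d / x * sqrt (x / d) = sqrt (d / x)"
      using x by (simp add: real_sqrt_divide field_simps flip: real_sqrt_mult)
    then show ?thesis using x s by (simp add: field_simps)
  qed simp
  finally show ?thesis unfolding d_def .
qed

lemma prob_lost_within_gnp_le:
  assumes s: "s > 0" and v0: "\<And>E. v0 E < n" and x: "x = real n * p" "x > 0" and g: "g \<le> x / 40"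
  shows "measure_pmf.prob
             (bind_pmf (gnp n p) (\<lambda>E. map_pmf (\<lambda>xs. (E, xs)) (bd_traj n E s {v0 E} T)))
             {(E, xs). real (deg n E (v0 E)) \<le> g \<and>
                       lost_within xs (v0 E) (sqrt (real n * p / real (deg n E (v0 E))))}
       \<le> measure_pmf.prob (gnp n p) {E. has_light_edge n E (x / 20)} + 40 / s * sqrt (max 0 g / x)"
  unfolding measure_pmf_prob_bind x(1)[symmetric]
proof (rule expectation_le_prob_add)
  fix E assume light: "E \<notin> {E. has_light_edge n E (x / 20)}"
  let ?d = "real (deg n E (v0 E))"
  show "measure_pmf.prob (map_pmf (Pair E) (bd_traj n E s {v0 E} T))
      {(G, xs). real (deg n G (v0 G)) \<le> g \<and> lost_within xs (v0 G) (sqrt (x / real (deg n G (v0 G))))}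
      \<le> 40 / s * sqrt (max 0 g / x)"
  proof (cases "?d \<le> g")
    case True
    have "measure_pmf.prob (map_pmf (Pair E) (bd_traj n E s {v0 E} T))
        {(G, xs). real (deg n G (v0 G)) \<le> g \<and> lost_within xs (v0 G) (sqrt (x / real (deg n G (v0 G))))}
        = measure_pmf.prob (bd_traj n E s {v0 E} T) {ys. lost_within ys (v0 E) (sqrt (x / ?d))}"
      using True by (simp add: vimage_def)
    also have "\<dots> \<le> 40 / s * sqrt (?d / x)"
      using light True g by (intro prob_lost_within_no_light_edge[OF s v0 x(2)]) auto
    also have "\<dots> \<le> 40 / s * sqrt (max 0 g / x)"
      using True s x by (intro mult_left_mono real_sqrt_le_mono divide_right_mono) auto
    finally show ?thesis .
  qed (use s x in auto)
qed (use s x in auto)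

definition gnp_regime :: "real \<Rightarrow> nat \<Rightarrow> real \<Rightarrow> bool" where
  "gnp_regime C n q \<longleftrightarrow> 2 \<le> n \<and> 0 < ln (real n) \<and> ln (real n) \<le> real n * q \<and>
     real n * q \<le> C * ln (real n) \<and> 0 \<le> q \<and> q \<le> 1"

lemma eventually_gnp_regime:
  fixes om p :: "nat \<Rightarrow> real"
  assumes om: "filterlim om at_top sequentially" and p: "\<forall>n. p n = (ln (real n) + om n) / real n"
    and np: "(\<lambda>n. real n * p n) \<in> O(\<lambda>n. ln (real n))"
  obtains C where "C > 0" "eventually (\<lambda>n. gnp_regime C n (p n)) sequentially"
proof -
  obtain C where C: "C > 0" and C_bound: "eventually (\<lambda>n. norm (real n * p n) \<le> C * norm (ln (real n))) sequentially"
    using landau_o.bigE[OF np] by blast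
  have "((\<lambda>n::nat. ln (real n) / real n) \<longlongrightarrow> 0) sequentially" by real_asymp
  then have small: "eventually (\<lambda>n::nat. ln (real n) / real n < 1 / C) sequentially"
    using C by (intro order_tendstoD) auto
  have "eventually (\<lambda>n. om n \<ge> 0) sequentially"
    using om by (simp add: filterlim_at_top)
  with C_bound small eventually_ge_at_top[of 2]
  have "eventually (\<lambda>n. gnp_regime C n (p n)) sequentially"
  proof eventually_elim
    case (elim n)
    then have n: "real n \<ge> 2" and ln: "ln (real n) > 0" by auto
    have x: "real n * p n = ln (real n) + om n" using p n by simp
    then have "real n * p n \<le> C * ln (real n)" using elim ln by simp
    moreover have "C * ln (real n) < real n" using elim C n by (simp add: field_simps)
    ultimately have "0 \<le> real n * p n" "real n * p n \<le> real n * 1" using elim x ln by simp_all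
    then have "0 \<le> p n \<and> p n \<le> 1" using n by (simp add: zero_le_mult_iff mult_le_cancel_left)
    then show ?case using elim x ln n unfolding gnp_regime_def by simp
  qed
  with C that show ?thesis by blast
qed

lemma eventually_no_light_edge:
  fixes om p :: "nat \<Rightarrow> real"
  assumes "filterlim om at_top sequentially" "\<forall>n. p n = (ln (real n) + om n) / real n"
    and "(\<lambda>n. real n * p n) \<in> O(\<lambda>n. ln (real n))" and \<epsilon>: "\<epsilon> > 0"
  shows "eventually (\<lambda>n. measure_pmf.prob (gnp n (p n)) {E. has_light_edge n E (real n * p n / 20)} \<le> \<epsilon>) sequentially"
proof -
  obtain C where C: "C > 0" and regime: "eventually (\<lambda>n. gnp_regime C n (p n)) sequentially"
    using eventually_gnp_regime[OF assms(1-3)] by blast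
  have "((\<lambda>n::nat. ln (real n) * real n powr (-7/30)) \<longlongrightarrow> 0) sequentially" by real_asymp
  then have "eventually (\<lambda>n::nat. ln (real n) * real n powr (-7/30) < \<epsilon> / (exp 3 * C)) sequentially"
    using C \<epsilon> by (intro order_tendstoD) auto
  with regime show ?thesis
  proof eventually_elim
    case (elim n)
    then have "measure_pmf.prob (gnp n (p n)) {E. has_light_edge n E (real n * p n / 20)}
        \<le> exp 3 * C * ln (real n) * real n powr (-7/30)"
      unfolding gnp_regime_def by (intro order.trans[OF prob_has_light_edge_le light_edge_bound_le]) auto
    also have "\<dots> \<le> \<epsilon>"
      using elim C by (simp add: field_simps)
    finally show ?case .
  qed
qed

lemma eventually_degree_term_le:
  fixes f g :: "nat \<Rightarrow> real"
  assumes g: "g \<in> o(f)" and s: "s > 0" and \<epsilon>: "\<epsilon> > 0"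
  shows "eventually (\<lambda>n. 0 < f n \<longrightarrow> g n \<le> f n / 40 \<and> 40 / s * sqrt (max 0 (g n) / f n) \<le> \<epsilon>) sequentially"
proof -
  define \<kappa> where "\<kappa> = min (1/40) ((\<epsilon> * s / 40)^2)"
  have "\<kappa> > 0" unfolding \<kappa>_def using \<epsilon> s by simp
  with g have "eventually (\<lambda>n. norm (g n) \<le> \<kappa> * norm (f n)) sequentially"
    by (rule landau_o.smallD)
  then show ?thesis
  proof eventually_elim
    case (elim n)
    show ?case
    proof
      assume f: "0 < f n"
      then have g: "max 0 (g n) \<le> \<kappa> * f n" using elim \<open>\<kappa> > 0\<close> by simp
      also have "\<dots> \<le> f n / 40" using f unfolding \<kappa>_def by simp
      finally have "g n \<le> f n / 40" by simp
      have "\<kappa> * f n \<le> (\<epsilon> * s / 40)^2 * f n"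
        using f unfolding \<kappa>_def by (intro mult_right_mono) auto
      with g have "max 0 (g n) \<le> (\<epsilon> * s / 40)^2 * f n" by (rule order.trans)
      then have "max 0 (g n) / f n \<le> (\<epsilon> * s / 40)^2"
        using f by (simp add: divide_le_eq)
      then have "sqrt (max 0 (g n) / f n) \<le> \<epsilon> * s / 40"
        using \<epsilon> s real_sqrt_le_mono by fastforce
      then show "g n \<le> f n / 40 \<and> 40 / s * sqrt (max 0 (g n) / f n) \<le> \<epsilon>"
        using \<open>g n \<le> f n / 40\<close> s by (simp add: field_simps)
    qed
  qed
qed

theorem mainTheorem12:
  fixes s :: real and om :: "nat \<Rightarrow> real" and p :: "nat \<Rightarrow> real"
    and g :: "nat \<Rightarrow> real" and v0 :: "nat \<Rightarrow> graph \<Rightarrow> nat"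
  assumes "s > 1"
    and "filterlim om at_top sequentially"
    and "\<forall>n. p n = (ln (real n) + om n) / real n"
    and "(\<lambda>n. real n * p n) \<in> O(\<lambda>n. ln (real n))"
    and "g \<in> o(\<lambda>n. real n * p n)"
    and "\<forall>n>0. \<forall>E. v0 n E < n"
  shows "\<forall>\<epsilon>>0. eventually (\<lambda>n. \<forall>T.
           measure_pmf.prob
             (bind_pmf (gnp n (p n)) (\<lambda>E. map_pmf (\<lambda>xs. (E, xs)) (bd_traj n E s {v0 n E} T)))
             {(E, xs). real (deg n E (v0 n E)) \<le> g n \<and>
                       lost_within xs (v0 n E) (sqrt (real n * p n / real (deg n E (v0 n E))))}
           \<le> \<epsilon>) sequentially"
proof (intro allI impI, goal_cases)
  case (1 \<epsilon>)
  have s: "s > 0" using assms(1) by simp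
  obtain C where "eventually (\<lambda>n. gnp_regime C n (p n)) sequentially"
    using eventually_gnp_regime[OF assms(2-4)] by blast
  then have "eventually (\<lambda>n. 0 < real n * p n) sequentially"
    by eventually_elim (auto simp: gnp_regime_def)
  moreover have "eventually (\<lambda>n. measure_pmf.prob (gnp n (p n)) {E. has_light_edge n E (real n * p n / 20)} \<le> \<epsilon> / 2) sequentially"
    using eventually_no_light_edge[OF assms(2-4), of "\<epsilon> / 2"] 1 by simp
  moreover have "eventually (\<lambda>n. 0 < real n * p n \<longrightarrow> g n \<le> real n * p n / 40 \<and>
      40 / s * sqrt (max 0 (g n) / (real n * p n)) \<le> \<epsilon> / 2) sequentially"
    using eventually_degree_term_le[OF assms(5) s, of "\<epsilon> / 2"] 1 by simp
  ultimately show ?case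
  proof eventually_elim
    case (elim n)
    then have "n \<noteq> 0" by (intro notI) simp
    then have v0: "\<And>E. v0 n E < n" using assms(6) by simp
    show ?case
      by (intro allI order.trans[OF prob_lost_within_gnp_le[OF s v0 refl]]) (use elim in linarith)+
  qed
qed

end
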